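(* Let $M$ be a right $R$-module with $S=\mathrm{End}_R(M)$. Consider the statements: (i) $M$ is an abelian Rickart module; (ii) $M$ is a centrally endo-AIP module; (iii) $M$ is an endo-AIP module. Then (i) $\Rightarrow$ (ii) and (ii) $\Rightarrow$ (iii). Neither converse holds in general: there exist modules satisfying (ii) but not (i), and modules satisfying (iii) but not (ii).
   Context: Rings are associative with identity; modules are unitary right modules. For $N\le M$, $l_S(N)=\{\phi\in S:\phi(N)=0\}$. A submodule $N$ is fully invariant if $\phi(N)\subseteq N$ for all $\phi\in S$. An ideal $I$ of a ring $A$ is right s-unital if for every $a\in I$ there is $x\in I$ with $ax=a$; it is centrally s-unital if for every $a\in I$ there is an element $z\in I$ central in $A$ with $az=a$. $M$ is centrally endo-AIP if $l_S(N)$ is a centrally s-unital ideal of $S$ for every fully invariant submodule $N$ of $M$; $M$ is endo-AIP if $l_S(N)$ is a right s-unital ideal of $S$ for every fully invariant submodule $N$. $M$ is Rickart if $\ker\phi$ is a direct summand of $M$ for every $\phi\in S$; $M$ is abelian if every idempotent of $S$ is central in $S$. *)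

theory Defs
  imports Complex_Main "HOL-Algebra.Ring" "HOL-Algebra.Ideal" "HOL-Algebra.Module" "HOL-Library.FuncSet"
begin

text \<open>We reuse the HOL-Algebra record type ('a,'b) module, but read
  the scalar action  smult M a x  as the RIGHT action  x a.\<close>

definition rsm :: "('a, 'b, 'c) module_scheme \<Rightarrow> 'b \<Rightarrow> 'a \<Rightarrow> 'b"
  where "rsm M x a = smult M a x"

definition right_module :: "('a, 'c) ring_scheme \<Rightarrow> ('a, 'b, 'd) module_scheme \<Rightarrow> bool" where
  "right_module R M \<longleftrightarrow> ring R \<and> abelian_group M \<and>
     (\<forall>a\<in>carrier R. \<forall>x\<in>carrier M. rsm M x a \<in> carrier M) \<and>
     (\<forall>a\<in>carrier R. \<forall>x\<in>carrier M. \<forall>y\<in>carrier M.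
         rsm M (x \<oplus>\<^bsub>M\<^esub> y) a = rsm M x a \<oplus>\<^bsub>M\<^esub> rsm M y a) \<and>
     (\<forall>a\<in>carrier R. \<forall>b\<in>carrier R. \<forall>x\<in>carrier M.
         rsm M x (a \<oplus>\<^bsub>R\<^esub> b) = rsm M x a \<oplus>\<^bsub>M\<^esub> rsm M x b) \<and>
     (\<forall>a\<in>carrier R. \<forall>b\<in>carrier R. \<forall>x\<in>carrier M.
         rsm M x (a \<otimes>\<^bsub>R\<^esub> b) = rsm M (rsm M x a) b) \<and>
     (\<forall>x\<in>carrier M. rsm M x \<one>\<^bsub>R\<^esub> = x)"

definition rsubmodule :: "('a, 'c) ring_scheme \<Rightarrow> 'b set \<Rightarrow> ('a, 'b, 'd) module_scheme \<Rightarrow> bool" where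
  "rsubmodule R N M \<longleftrightarrow> N \<subseteq> carrier M \<and> additive_subgroup N M \<and>
     (\<forall>a\<in>carrier R. \<forall>x\<in>N. rsm M x a \<in> N)"

definition End :: "('a, 'c) ring_scheme \<Rightarrow> ('a, 'b, 'd) module_scheme \<Rightarrow> ('b \<Rightarrow> 'b) set" where
  "End R M = {f. f \<in> extensional (carrier M) \<and> f \<in> carrier M \<rightarrow> carrier M \<and>
      (\<forall>x\<in>carrier M. \<forall>y\<in>carrier M. f (x \<oplus>\<^bsub>M\<^esub> y) = f x \<oplus>\<^bsub>M\<^esub> f y) \<and>
      (\<forall>a\<in>carrier R. \<forall>x\<in>carrier M. f (rsm M x a) = rsm M (f x) a)}"

definition End_ring :: "('a, 'c) ring_scheme \<Rightarrow> ('a, 'b, 'd) module_scheme \<Rightarrow> ('b \<Rightarrow> 'b) ring" where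
  "End_ring R M = \<lparr> carrier = End R M,
      mult = (\<lambda>f g. compose (carrier M) f g),
      one = (\<lambda>x\<in>carrier M. x),
      zero = (\<lambda>x\<in>carrier M. \<zero>\<^bsub>M\<^esub>),
      add = (\<lambda>f g. \<lambda>x\<in>carrier M. f x \<oplus>\<^bsub>M\<^esub> g x) \<rparr>"

definition fully_invariant :: "('a, 'c) ring_scheme \<Rightarrow> 'b set \<Rightarrow> ('a, 'b, 'd) module_scheme \<Rightarrow> bool" where
  "fully_invariant R N M \<longleftrightarrow> rsubmodule R N M \<and> (\<forall>\<phi>\<in>End R M. \<phi> ` N \<subseteq> N)"

definition lann :: "('a, 'c) ring_scheme \<Rightarrow> ('a, 'b, 'd) module_scheme \<Rightarrow> 'b set \<Rightarrow> ('b \<Rightarrow> 'b) set" where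
  "lann R M N = {\<phi> \<in> End R M. \<forall>x\<in>N. \<phi> x = \<zero>\<^bsub>M\<^esub>}"

definition right_s_unital_ideal :: "'e set \<Rightarrow> ('e, 'f) ring_scheme \<Rightarrow> bool" where
  "right_s_unital_ideal I A \<longleftrightarrow> ideal I A \<and> (\<forall>a\<in>I. \<exists>x\<in>I. a \<otimes>\<^bsub>A\<^esub> x = a)"

definition centrally_s_unital_ideal :: "'e set \<Rightarrow> ('e, 'f) ring_scheme \<Rightarrow> bool" where
  "centrally_s_unital_ideal I A \<longleftrightarrow> ideal I A \<and>
     (\<forall>a\<in>I. \<exists>z\<in>I. (\<forall>s\<in>carrier A. z \<otimes>\<^bsub>A\<^esub> s = s \<otimes>\<^bsub>A\<^esub> z) \<and> a \<otimes>\<^bsub>A\<^esub> z = a)"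

definition centrally_endo_AIP :: "('a, 'c) ring_scheme \<Rightarrow> ('a, 'b, 'd) module_scheme \<Rightarrow> bool" where
  "centrally_endo_AIP R M \<longleftrightarrow>
     (\<forall>N. fully_invariant R N M \<longrightarrow> centrally_s_unital_ideal (lann R M N) (End_ring R M))"

definition endo_AIP :: "('a, 'c) ring_scheme \<Rightarrow> ('a, 'b, 'd) module_scheme \<Rightarrow> bool" where
  "endo_AIP R M \<longleftrightarrow>
     (\<forall>N. fully_invariant R N M \<longrightarrow> right_s_unital_ideal (lann R M N) (End_ring R M))"

definition direct_summand :: "('a, 'c) ring_scheme \<Rightarrow> 'b set \<Rightarrow> ('a, 'b, 'd) module_scheme \<Rightarrow> bool" where
  "direct_summand R N M \<longleftrightarrow> rsubmodule R N M \<and>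
     (\<exists>K. rsubmodule R K M \<and> N \<inter> K = {\<zero>\<^bsub>M\<^esub>} \<and>
          carrier M = {x \<oplus>\<^bsub>M\<^esub> y | x y. x \<in> N \<and> y \<in> K})"

definition rickart :: "('a, 'c) ring_scheme \<Rightarrow> ('a, 'b, 'd) module_scheme \<Rightarrow> bool" where
  "rickart R M \<longleftrightarrow>
     (\<forall>\<phi>\<in>End R M. direct_summand R {x \<in> carrier M. \<phi> x = \<zero>\<^bsub>M\<^esub>} M)"

definition abelian_module :: "('a, 'c) ring_scheme \<Rightarrow> ('a, 'b, 'd) module_scheme \<Rightarrow> bool" where
  "abelian_module R M \<longleftrightarrow>
     (\<forall>e\<in>carrier (End_ring R M). e \<otimes>\<^bsub>End_ring R M\<^esub> e = e \<longrightarrow>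
        (\<forall>s\<in>carrier (End_ring R M). e \<otimes>\<^bsub>End_ring R M\<^esub> s = s \<otimes>\<^bsub>End_ring R M\<^esub> e))"

end

theory Submission
  imports Defs
begin

(* For a Rickart module, the kernel of any \<phi> \<in> l_S(N) is a direct summand containing N, and the
   projection q onto a complement is an idempotent of l_S(N) with \<phi> q = \<phi>; in an abelian module
   q is central. This gives (i) \<Rightarrow> (ii), and (ii) \<Rightarrow> (iii) is immediate.
   Both counterexamples live over the ring R of upper triangular 2x2 matrices over GF(2).
   On GF(2)^3, with R acting through its (2,2) entry, every additive map is R-linear, so
   End = M_3(GF(2)): the only fully invariant submodules are 0 and M, which makes the module
   centrally endo-AIP, while M_3(GF(2)) has non-central idempotents. The regular module R_R is
   Rickart, hence endo-AIP; but for N = E11 R a central right unit z \<in> l_S(N) of E22 would be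
   left multiplication by some c with c E11 = 0 and E22 c = E22, and such a c does not commute
   with E12. *)

section \<open>Endomorphism rings of right modules\<close>

lemma End_ring_simps [simp]:
  "carrier (End_ring R M) = End R M"
  "mult (End_ring R M) = (\<lambda>f g. compose (carrier M) f g)"
  "one (End_ring R M) = (\<lambda>x\<in>carrier M. x)"
  "zero (End_ring R M) = (\<lambda>x\<in>carrier M. \<zero>\<^bsub>M\<^esub>)"
  "add (End_ring R M) = (\<lambda>f g. \<lambda>x\<in>carrier M. f x \<oplus>\<^bsub>M\<^esub> g x)"
  by (simp_all add: End_ring_def)

lemma additive_subgroup_closedI:
  assumes "abelian_group M" "N \<subseteq> carrier M" "\<zero>\<^bsub>M\<^esub> \<in> N"
    "\<And>x y. x \<in> N \<Longrightarrow> y \<in> N \<Longrightarrow> x \<oplus>\<^bsub>M\<^esub> y \<in> N"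
    "\<And>x. x \<in> N \<Longrightarrow> \<ominus>\<^bsub>M\<^esub> x \<in> N"
  shows "additive_subgroup N M"
  using assms by (intro additive_subgroupI subgroup.intro) (auto simp flip: a_inv_def)

context
  fixes R :: "('r, 'c) ring_scheme" and M :: "('r, 'm, 'd) module_scheme"
  assumes RM: "right_module R M"
begin

interpretation M: abelian_group M using RM unfolding right_module_def by blast

lemma rsm_closed: "a \<in> carrier R \<Longrightarrow> x \<in> carrier M \<Longrightarrow> rsm M x a \<in> carrier M"
  using RM unfolding right_module_def by blast

lemma rsm_add: "a \<in> carrier R \<Longrightarrow> x \<in> carrier M \<Longrightarrow> y \<in> carrier M \<Longrightarrow>
    rsm M (x \<oplus>\<^bsub>M\<^esub> y) a = rsm M x a \<oplus>\<^bsub>M\<^esub> rsm M y a"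
  using RM unfolding right_module_def by blast

lemma rsm_zero: "a \<in> carrier R \<Longrightarrow> rsm M \<zero>\<^bsub>M\<^esub> a = \<zero>\<^bsub>M\<^esub>"
  using rsm_add[of a "\<zero>\<^bsub>M\<^esub>" "\<zero>\<^bsub>M\<^esub>"] rsm_closed[of a "\<zero>\<^bsub>M\<^esub>"]
  by (simp add: M.add.l_cancel_one)

lemma rsm_neg: "a \<in> carrier R \<Longrightarrow> x \<in> carrier M \<Longrightarrow> rsm M (\<ominus>\<^bsub>M\<^esub> x) a = \<ominus>\<^bsub>M\<^esub> rsm M x a"
  using rsm_add[of a "\<ominus>\<^bsub>M\<^esub> x" x] rsm_closed rsm_zero
  by (metis M.a_inv_closed M.l_neg M.minus_equality)

lemma End_closed: "f \<in> End R M \<Longrightarrow> x \<in> carrier M \<Longrightarrow> f x \<in> carrier M"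
  unfolding End_def by blast

lemma End_add: "f \<in> End R M \<Longrightarrow> x \<in> carrier M \<Longrightarrow> y \<in> carrier M \<Longrightarrow>
    f (x \<oplus>\<^bsub>M\<^esub> y) = f x \<oplus>\<^bsub>M\<^esub> f y"
  unfolding End_def by blast

lemma End_rsm: "f \<in> End R M \<Longrightarrow> a \<in> carrier R \<Longrightarrow> x \<in> carrier M \<Longrightarrow>
    f (rsm M x a) = rsm M (f x) a"
  unfolding End_def by blast

lemma End_extensional: "f \<in> End R M \<Longrightarrow> f \<in> extensional (carrier M)"
  unfolding End_def by blast

lemma End_zero: "f \<in> End R M \<Longrightarrow> f \<zero>\<^bsub>M\<^esub> = \<zero>\<^bsub>M\<^esub>"
  using End_add[of f "\<zero>\<^bsub>M\<^esub>" "\<zero>\<^bsub>M\<^esub>"] End_closed[of f "\<zero>\<^bsub>M\<^esub>"]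
  by (simp add: M.add.l_cancel_one)

lemma End_neg: "f \<in> End R M \<Longrightarrow> x \<in> carrier M \<Longrightarrow> f (\<ominus>\<^bsub>M\<^esub> x) = \<ominus>\<^bsub>M\<^esub> f x"
  using End_add[of f "\<ominus>\<^bsub>M\<^esub> x" x] End_closed End_zero
  by (metis M.a_inv_closed M.l_neg M.minus_equality)

lemma End_eqI: "f \<in> End R M \<Longrightarrow> g \<in> End R M \<Longrightarrow> (\<And>x. x \<in> carrier M \<Longrightarrow> f x = g x) \<Longrightarrow> f = g"
  by (rule extensionalityI[OF End_extensional End_extensional])

lemma End_compose: "f \<in> End R M \<Longrightarrow> g \<in> End R M \<Longrightarrow> compose (carrier M) f g \<in> End R M"
  unfolding End_def using rsm_closed by (auto simp: compose_def Pi_iff)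

lemma End_id: "(\<lambda>x\<in>carrier M. x) \<in> End R M"
  unfolding End_def using rsm_closed by auto

lemma End_zero_map: "(\<lambda>x\<in>carrier M. \<zero>\<^bsub>M\<^esub>) \<in> End R M"
  unfolding End_def using rsm_closed rsm_zero by auto

lemma End_add_map:
  "f \<in> End R M \<Longrightarrow> g \<in> End R M \<Longrightarrow> (\<lambda>x\<in>carrier M. f x \<oplus>\<^bsub>M\<^esub> g x) \<in> End R M"
  unfolding End_def using rsm_closed rsm_add by (auto simp: Pi_iff M.a_ac)

lemma End_neg_map: "f \<in> End R M \<Longrightarrow> (\<lambda>x\<in>carrier M. \<ominus>\<^bsub>M\<^esub> f x) \<in> End R M"
  unfolding End_def using rsm_closed rsm_neg by (auto simp: Pi_iff M.minus_add)

lemma ring_End_ring: "ring (End_ring R M)"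
proof (rule ringI)
  show "abelian_group (End_ring R M)"
  proof (rule abelian_groupI)
    fix f assume "f \<in> carrier (End_ring R M)"
    then have f: "f \<in> End R M" by simp
    then show "\<zero>\<^bsub>End_ring R M\<^esub> \<oplus>\<^bsub>End_ring R M\<^esub> f = f"
      by (simp, intro extensionalityI[OF restrict_extensional End_extensional]) (auto simp: End_closed)
    show "\<exists>g\<in>carrier (End_ring R M). g \<oplus>\<^bsub>End_ring R M\<^esub> f = \<zero>\<^bsub>End_ring R M\<^esub>"
      using f by (intro bexI[of _ "\<lambda>x\<in>carrier M. \<ominus>\<^bsub>M\<^esub> f x"])
        (auto intro!: restrict_ext simp: End_neg_map End_closed M.l_neg)
  qed (auto intro!: restrict_ext simp: End_add_map End_zero_map M.a_ac End_closed)
  show "monoid (End_ring R M)"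
    by (rule monoidI)
      (auto intro: compose_assoc[symmetric] Id_compose compose_Id
        simp: End_compose End_id End_closed End_extensional)
qed (auto intro!: restrict_ext simp: compose_def End_closed End_add)

lemma ideal_lann:
  assumes FI: "fully_invariant R N M"
  shows "ideal (lann R M N) (End_ring R M)"
proof -
  interpret S: ring "End_ring R M" by (rule ring_End_ring)
  have N: "N \<subseteq> carrier M" "\<And>\<phi> x. \<phi> \<in> End R M \<Longrightarrow> x \<in> N \<Longrightarrow> \<phi> x \<in> N"
    using FI unfolding fully_invariant_def rsubmodule_def by blast+
  have l_closed: "x \<otimes>\<^bsub>End_ring R M\<^esub> \<phi> \<in> lann R M N"
    if "\<phi> \<in> lann R M N" "x \<in> carrier (End_ring R M)" for \<phi> x
    using that N by (auto simp: lann_def End_compose compose_eq End_zero)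
  have r_closed: "\<phi> \<otimes>\<^bsub>End_ring R M\<^esub> x \<in> lann R M N"
    if "\<phi> \<in> lann R M N" "x \<in> carrier (End_ring R M)" for \<phi> x
    using that N by (auto simp: lann_def End_compose compose_eq)
  show ?thesis
  proof (rule idealI[OF ring_End_ring _ l_closed r_closed], rule subgroup.intro)
    fix \<phi> assume \<phi>: "\<phi> \<in> lann R M N"
    then have "\<phi> \<in> carrier (End_ring R M)" by (simp add: lann_def)
    \<comment> \<open>additive inverses in End_ring are defined by THE, so reach them through \<open>(- 1) \<phi> = - \<phi>\<close>\<close>
    then have "\<ominus>\<^bsub>End_ring R M\<^esub> \<phi> = (\<ominus>\<^bsub>End_ring R M\<^esub> \<one>\<^bsub>End_ring R M\<^esub>) \<otimes>\<^bsub>End_ring R M\<^esub> \<phi>"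
      by (metis S.l_minus S.l_one S.one_closed)
    then have "\<ominus>\<^bsub>End_ring R M\<^esub> \<phi> \<in> lann R M N"
      using l_closed[OF \<phi>] S.a_inv_closed[OF S.one_closed] by metis
    then show "inv\<^bsub>add_monoid (End_ring R M)\<^esub> \<phi> \<in> lann R M N"
      by (simp only: a_inv_def)
  qed (use N in \<open>auto simp: lann_def End_add_map End_zero_map\<close>)
qed

section \<open>Direct summands and Rickart modules\<close>

lemma rsubmoduleD:
  assumes "rsubmodule R A M"
  shows "A \<subseteq> carrier M" "\<zero>\<^bsub>M\<^esub> \<in> A" "\<And>x y. x \<in> A \<Longrightarrow> y \<in> A \<Longrightarrow> x \<oplus>\<^bsub>M\<^esub> y \<in> A"
    "\<And>x. x \<in> A \<Longrightarrow> \<ominus>\<^bsub>M\<^esub> x \<in> A" "\<And>x a. x \<in> A \<Longrightarrow> a \<in> carrier R \<Longrightarrow> rsm M x a \<in> A"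
  using assms unfolding rsubmodule_def
  by (auto intro: additive_subgroup.a_closed additive_subgroup.zero_closed
      additive_subgroup.a_inv_closed)

lemma rsubmodule_kernel:
  assumes \<phi>: "\<phi> \<in> End R M"
  shows "rsubmodule R {x \<in> carrier M. \<phi> x = \<zero>\<^bsub>M\<^esub>} M"
  unfolding rsubmodule_def
proof (intro conjI ballI)
  show "additive_subgroup {x \<in> carrier M. \<phi> x = \<zero>\<^bsub>M\<^esub>} M"
    using End_zero[OF \<phi>] End_add[OF \<phi>] End_neg[OF \<phi>]
    by (intro additive_subgroup_closedI M.abelian_group_axioms) auto
qed (use \<phi> End_rsm[OF \<phi>] rsm_closed rsm_zero in auto)

lemma direct_sum_components_unique:
  assumes A: "rsubmodule R A M" and K: "rsubmodule R K M" and AK: "A \<inter> K = {\<zero>\<^bsub>M\<^esub>}"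
    and "a \<in> A" "k \<in> K" "a' \<in> A" "k' \<in> K" and eq: "a \<oplus>\<^bsub>M\<^esub> k = a' \<oplus>\<^bsub>M\<^esub> k'"
  shows "k = k'"
proof -
  note A' = rsubmoduleD[OF A] and K' = rsubmoduleD[OF K]
  have c: "a \<in> carrier M" "k \<in> carrier M" "a' \<in> carrier M" "k' \<in> carrier M"
    using assms A'(1) K'(1) by auto
  have "k' \<oplus>\<^bsub>M\<^esub> \<ominus>\<^bsub>M\<^esub> k = \<ominus>\<^bsub>M\<^esub> a' \<oplus>\<^bsub>M\<^esub> a"
  proof -
    have "\<ominus>\<^bsub>M\<^esub> a' \<oplus>\<^bsub>M\<^esub> a = \<ominus>\<^bsub>M\<^esub> a' \<oplus>\<^bsub>M\<^esub> (a \<oplus>\<^bsub>M\<^esub> k) \<oplus>\<^bsub>M\<^esub> \<ominus>\<^bsub>M\<^esub> k"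
      using c by (simp add: M.a_assoc M.r_neg)
    also have "\<dots> = k' \<oplus>\<^bsub>M\<^esub> \<ominus>\<^bsub>M\<^esub> k"
      using c by (simp add: eq M.a_assoc[symmetric] M.l_neg)
    finally show ?thesis by simp
  qed
  moreover have "k' \<oplus>\<^bsub>M\<^esub> \<ominus>\<^bsub>M\<^esub> k \<in> K" "\<ominus>\<^bsub>M\<^esub> a' \<oplus>\<^bsub>M\<^esub> a \<in> A"
    using A' K' assms by auto
  ultimately have "k' \<oplus>\<^bsub>M\<^esub> \<ominus>\<^bsub>M\<^esub> k = \<zero>\<^bsub>M\<^esub>" using AK by auto
  then show ?thesis using c by (metis M.a_inv_closed M.minus_equality M.minus_minus)
qed

lemma direct_summand_complement_projection:
  assumes "direct_summand R A M"
  obtains q where "q \<in> End R M" "\<forall>x\<in>A. q x = \<zero>\<^bsub>M\<^esub>"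
    "\<forall>x\<in>carrier M. \<exists>a\<in>A. x = a \<oplus>\<^bsub>M\<^esub> q x" "compose (carrier M) q q = q"
proof -
  obtain K where A: "rsubmodule R A M" and K: "rsubmodule R K M" and AK: "A \<inter> K = {\<zero>\<^bsub>M\<^esub>}"
    and sum: "carrier M = {x \<oplus>\<^bsub>M\<^esub> y | x y. x \<in> A \<and> y \<in> K}"
    using assms unfolding direct_summand_def by blast
  note A' = rsubmoduleD[OF A] and K' = rsubmoduleD[OF K]
  define q where "q = (\<lambda>x\<in>carrier M. THE k. k \<in> K \<and> (\<exists>a\<in>A. x = a \<oplus>\<^bsub>M\<^esub> k))"
  have q_sum: "q (a \<oplus>\<^bsub>M\<^esub> k) = k" if "a \<in> A" "k \<in> K" for a k
  proof -
    have "(THE k'. k' \<in> K \<and> (\<exists>a'\<in>A. a \<oplus>\<^bsub>M\<^esub> k = a' \<oplus>\<^bsub>M\<^esub> k')) = k"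
      using that direct_sum_components_unique[OF A K AK] by (intro the_equality) blast+
    then show ?thesis using that A'(1) K'(1) by (auto simp: q_def)
  qed
  have decompose: "\<exists>a\<in>A. \<exists>k\<in>K. x = a \<oplus>\<^bsub>M\<^esub> k" if "x \<in> carrier M" for x
    using that sum by blast
  have q_in_K: "q x \<in> K" if "x \<in> carrier M" for x
    using decompose[OF that] q_sum by auto
  have qE: "q \<in> End R M"
    unfolding End_def
  proof (intro CollectI conjI ballI)
    show "q \<in> extensional (carrier M)" by (simp add: q_def)
    show "q \<in> carrier M \<rightarrow> carrier M" using q_in_K K'(1) by auto
    fix x y assume "x \<in> carrier M" "y \<in> carrier M"
    then obtain a k a' k' where "a \<in> A" "k \<in> K" "x = a \<oplus>\<^bsub>M\<^esub> k" "a' \<in> A" "k' \<in> K" "y = a' \<oplus>\<^bsub>M\<^esub> k'"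
      using decompose by metis
    moreover from this have "x \<oplus>\<^bsub>M\<^esub> y = (a \<oplus>\<^bsub>M\<^esub> a') \<oplus>\<^bsub>M\<^esub> (k \<oplus>\<^bsub>M\<^esub> k')"
      using A'(1) K'(1) by (simp add: subset_iff M.a_ac)
    ultimately show "q (x \<oplus>\<^bsub>M\<^esub> y) = q x \<oplus>\<^bsub>M\<^esub> q y"
      using q_sum A' K' by simp
  next
    fix r x assume r: "r \<in> carrier R" and "x \<in> carrier M"
    then obtain a k where "a \<in> A" "k \<in> K" "x = a \<oplus>\<^bsub>M\<^esub> k" using decompose by blast
    moreover from this have "rsm M x r = rsm M a r \<oplus>\<^bsub>M\<^esub> rsm M k r"
      using r A'(1) K'(1) by (metis rsm_add subsetD)
    ultimately show "q (rsm M x r) = rsm M (q x) r"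
      using q_sum A' K' r by simp
  qed
  moreover have "\<forall>x\<in>A. q x = \<zero>\<^bsub>M\<^esub>"
    using q_sum[OF _ K'(2)] A'(1) by (metis M.r_zero subsetD)
  moreover have "\<forall>x\<in>carrier M. \<exists>a\<in>A. x = a \<oplus>\<^bsub>M\<^esub> q x"
    using decompose q_sum by fastforce
  moreover have "compose (carrier M) q q = q"
  proof (rule End_eqI[OF End_compose[OF qE qE] qE])
    fix x assume x: "x \<in> carrier M"
    then have "q x \<in> K" by (rule q_in_K)
    then have "q (q x) = q x"
      using q_sum[OF A'(2), of "q x"] K'(1) by (metis M.l_zero subsetD)
    then show "compose (carrier M) q q x = q x" using x by (simp add: compose_eq)
  qed
  ultimately show ?thesis by (rule that)
qed

lemma rickart_lann_idempotent_right_unit: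
  assumes "rickart R M" and \<phi>: "\<phi> \<in> lann R M N" and N: "N \<subseteq> carrier M"
  obtains q where "q \<in> lann R M N" "compose (carrier M) q q = q" "compose (carrier M) \<phi> q = \<phi>"
proof -
  have \<phi>E: "\<phi> \<in> End R M" and \<phi>N: "\<forall>x\<in>N. \<phi> x = \<zero>\<^bsub>M\<^esub>" using \<phi> by (auto simp: lann_def)
  then have "direct_summand R {x \<in> carrier M. \<phi> x = \<zero>\<^bsub>M\<^esub>} M"
    using \<open>rickart R M\<close> by (simp add: rickart_def)
  then obtain q where qE: "q \<in> End R M" and q_ker: "\<forall>x\<in>{x \<in> carrier M. \<phi> x = \<zero>\<^bsub>M\<^esub>}. q x = \<zero>\<^bsub>M\<^esub>"
    and q_dec: "\<forall>x\<in>carrier M. \<exists>a\<in>{x \<in> carrier M. \<phi> x = \<zero>\<^bsub>M\<^esub>}. x = a \<oplus>\<^bsub>M\<^esub> q x"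
    and "compose (carrier M) q q = q"
    by (rule direct_summand_complement_projection)
  moreover have "q \<in> lann R M N" using qE q_ker \<phi>N N by (auto simp: lann_def)
  moreover have "compose (carrier M) \<phi> q = \<phi>"
  proof (rule End_eqI[OF End_compose[OF \<phi>E qE] \<phi>E])
    fix x assume x: "x \<in> carrier M"
    then obtain a where "a \<in> carrier M" "\<phi> a = \<zero>\<^bsub>M\<^esub>" "x = a \<oplus>\<^bsub>M\<^esub> q x" using q_dec by blast
    then have "\<phi> x = \<phi> (q x)"
      using x End_add[OF \<phi>E] End_closed[OF \<phi>E] End_closed[OF qE] by (metis M.l_zero)
    then show "compose (carrier M) \<phi> q x = \<phi> x" using x by (simp add: compose_eq)
  qed
  ultimately show ?thesis using that by blast
qed

section \<open>Endo-AIP modules\<close>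

lemma abelian_rickart_imp_centrally_endo_AIP:
  assumes "abelian_module R M" "rickart R M"
  shows "centrally_endo_AIP R M"
  unfolding centrally_endo_AIP_def centrally_s_unital_ideal_def
proof (intro allI impI conjI ballI)
  fix N assume FI: "fully_invariant R N M"
  then show "ideal (lann R M N) (End_ring R M)" by (rule ideal_lann)
  have N: "N \<subseteq> carrier M" using FI unfolding fully_invariant_def rsubmodule_def by blast
  fix \<phi> assume "\<phi> \<in> lann R M N"
  then obtain q where q: "q \<in> lann R M N" "compose (carrier M) q q = q" "compose (carrier M) \<phi> q = \<phi>"
    using rickart_lann_idempotent_right_unit[OF \<open>rickart R M\<close> _ N] by blast
  moreover have "\<forall>s\<in>End R M. compose (carrier M) q s = compose (carrier M) s q"
    using \<open>abelian_module R M\<close> q unfolding abelian_module_def by (simp add: lann_def)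
  ultimately show "\<exists>z\<in>lann R M N. (\<forall>s\<in>carrier (End_ring R M).
      z \<otimes>\<^bsub>End_ring R M\<^esub> s = s \<otimes>\<^bsub>End_ring R M\<^esub> z) \<and> \<phi> \<otimes>\<^bsub>End_ring R M\<^esub> z = \<phi>"
    by auto
qed

lemma rickart_imp_endo_AIP:
  assumes "rickart R M"
  shows "endo_AIP R M"
  unfolding endo_AIP_def right_s_unital_ideal_def
proof (intro allI impI conjI ballI)
  fix N assume FI: "fully_invariant R N M"
  then show "ideal (lann R M N) (End_ring R M)" by (rule ideal_lann)
  have N: "N \<subseteq> carrier M" using FI unfolding fully_invariant_def rsubmodule_def by blast
  fix \<phi> assume "\<phi> \<in> lann R M N"
  then obtain q where "q \<in> lann R M N" "compose (carrier M) \<phi> q = \<phi>"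
    using rickart_lann_idempotent_right_unit[OF \<open>rickart R M\<close> _ N] by blast
  then show "\<exists>x\<in>lann R M N. \<phi> \<otimes>\<^bsub>End_ring R M\<^esub> x = \<phi>" by auto
qed

lemma trivial_fully_invariant_imp_centrally_endo_AIP:
  assumes trivial: "\<And>N. fully_invariant R N M \<Longrightarrow> N \<subseteq> {\<zero>\<^bsub>M\<^esub>} \<or> N = carrier M"
  shows "centrally_endo_AIP R M"
  unfolding centrally_endo_AIP_def centrally_s_unital_ideal_def
proof (intro allI impI conjI ballI)
  fix N assume FI: "fully_invariant R N M"
  then show "ideal (lann R M N) (End_ring R M)" by (rule ideal_lann)
  fix \<phi> assume \<phi>: "\<phi> \<in> lann R M N"
  then have \<phi>E: "\<phi> \<in> End R M" by (simp add: lann_def)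
  show "\<exists>z\<in>lann R M N. (\<forall>s\<in>carrier (End_ring R M).
      z \<otimes>\<^bsub>End_ring R M\<^esub> s = s \<otimes>\<^bsub>End_ring R M\<^esub> z) \<and> \<phi> \<otimes>\<^bsub>End_ring R M\<^esub> z = \<phi>"
  proof (cases "N \<subseteq> {\<zero>\<^bsub>M\<^esub>}")
    case True
    let ?id = "\<lambda>x\<in>carrier M. x"
    have "?id \<in> lann R M N" using True End_id by (auto simp: lann_def)
    moreover have "compose (carrier M) ?id s = s" "compose (carrier M) s ?id = s"
      if "s \<in> End R M" for s
      using that End_closed End_extensional by (auto intro: Id_compose compose_Id)
    ultimately show ?thesis using \<phi>E by (intro bexI[of _ ?id]) auto
  next
    case False
    \<comment> \<open>then \<open>\<phi> = 0\<close>, which is its own central right unit\<close>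
    then have "\<phi> x = \<zero>\<^bsub>M\<^esub>" if "x \<in> carrier M" for x
      using trivial[OF FI] \<phi> that by (auto simp: lann_def)
    then have "compose (carrier M) \<phi> s = compose (carrier M) s \<phi>" if "s \<in> End R M" for s
      using that \<phi>E by (intro End_eqI End_compose) (simp_all add: compose_eq End_closed End_zero)
    moreover have "compose (carrier M) \<phi> \<phi> = \<phi>"
      using \<phi>E \<open>\<And>x. x \<in> carrier M \<Longrightarrow> \<phi> x = \<zero>\<^bsub>M\<^esub>\<close>
      by (intro End_eqI End_compose) (simp_all add: compose_eq End_closed)
    ultimately show ?thesis using \<phi> by auto
  qed
qed

end

lemma centrally_endo_AIP_imp_endo_AIP: "centrally_endo_AIP R M \<Longrightarrow> endo_AIP R M"
  unfolding centrally_endo_AIP_def endo_AIP_def centrally_s_unital_ideal_def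
    right_s_unital_ideal_def
  by blast

section \<open>Modules over upper triangular 2x2 matrices over GF(2)\<close>

text \<open>\<open>(a, b, c) :: tri\<close> is the matrix \<open>[[a, b], [0, c]]\<close> over GF(2).\<close>
type_synonym tri = "bool \<times> bool \<times> bool"

abbreviation "tri_0 \<equiv> (False, False, False)"
abbreviation "tri_1 \<equiv> (True, False, True)"
abbreviation "E11 \<equiv> (True, False, False)"
abbreviation "E12 \<equiv> (False, True, False)"
abbreviation "E22 \<equiv> (False, False, True)"

definition tri_add :: "tri \<Rightarrow> tri \<Rightarrow> tri" where
  "tri_add t u = (fst t \<noteq> fst u, fst (snd t) \<noteq> fst (snd u), snd (snd t) \<noteq> snd (snd u))"

definition tri_mul :: "tri \<Rightarrow> tri \<Rightarrow> tri" where
  "tri_mul t u = (fst t \<and> fst u, (fst t \<and> fst (snd u)) \<noteq> (fst (snd t) \<and> snd (snd u)),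
     snd (snd t) \<and> snd (snd u))"

definition scale_by_22 :: "tri \<Rightarrow> tri \<Rightarrow> tri" where
  "scale_by_22 v a = (if snd (snd a) then v else tri_0)"

text \<open>The theorem asks for structures on \<open>real set\<close>; triples are encoded as subsets of \<open>{0, 1, 2}\<close>.\<close>
definition enc :: "tri \<Rightarrow> real set" where
  "enc t = {x. (x = 0 \<and> fst t) \<or> (x = 1 \<and> fst (snd t)) \<or> (x = 2 \<and> snd (snd t))}"

definition dec :: "real set \<Rightarrow> tri" where
  "dec A = (0 \<in> A, 1 \<in> A, 2 \<in> A)"

lemma dec_enc [simp]: "dec (enc t) = t"
  by (cases t) (auto simp: dec_def enc_def)

lemma enc_eq_iff [simp]: "enc t = enc u \<longleftrightarrow> t = u"
  by (metis dec_enc)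

lemma tri_add_zero [simp]: "tri_add tri_0 t = t" "tri_add t tri_0 = t"
  by (simp_all add: tri_add_def)

lemma tri_add_self [simp]: "tri_add t t = tri_0"
  by (simp add: tri_add_def)

lemma tri_add_cancel [simp]: "tri_add (tri_add t u) u = t"
  by (auto simp: tri_add_def prod_eq_iff)

lemma tri_mul_one [simp]: "tri_mul tri_1 t = t" "tri_mul t tri_1 = t"
  by (simp_all add: tri_mul_def)

lemma tri_mul_assoc: "tri_mul (tri_mul t u) v = tri_mul t (tri_mul u v)"
  by (auto simp: tri_mul_def)

lemma tri_mul_add_distrib:
  "tri_mul (tri_add t u) v = tri_add (tri_mul t v) (tri_mul u v)"
  "tri_mul v (tri_add t u) = tri_add (tri_mul v t) (tri_mul v u)"
  by (auto simp: tri_add_def tri_mul_def)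

lemma ex_tri_add_inverse: "x \<in> range enc \<Longrightarrow> \<exists>y\<in>range enc. enc (tri_add (dec y) (dec x)) = enc tri_0"
  by (intro bexI[of _ x]) auto

definition T2 :: "real set ring" where
  "T2 = \<lparr>carrier = range enc, mult = \<lambda>A B. enc (tri_mul (dec A) (dec B)), one = enc tri_1,
     zero = enc tri_0, add = \<lambda>A B. enc (tri_add (dec A) (dec B))\<rparr>"

definition tri_module :: "(tri \<Rightarrow> tri \<Rightarrow> tri) \<Rightarrow> (real set, real set) module" where
  "tri_module act = \<lparr>carrier = range enc, mult = undefined, one = undefined,
     zero = enc tri_0, add = \<lambda>A B. enc (tri_add (dec A) (dec B)),
     smult = \<lambda>a x. enc (act (dec x) (dec a))\<rparr>"

lemma tri_module_simps [simp]:
  "carrier (tri_module act) = range enc"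
  "\<zero>\<^bsub>tri_module act\<^esub> = enc tri_0"
  "enc t \<oplus>\<^bsub>tri_module act\<^esub> enc u = enc (tri_add t u)"
  "rsm (tri_module act) (enc t) (enc a) = enc (act t a)"
  by (simp_all add: tri_module_def rsm_def)

lemma ring_T2: "ring T2"
  by (intro ringI abelian_groupI monoidI)
    (simp_all add: T2_def ex_tri_add_inverse, auto simp: tri_add_def tri_mul_def)

lemma abelian_group_tri_module: "abelian_group (tri_module act)"
  by (intro abelian_groupI)
    (simp_all add: tri_module_def ex_tri_add_inverse, auto simp: tri_add_def)

lemma tri_module_neg: "x \<in> range enc \<Longrightarrow> \<ominus>\<^bsub>tri_module act\<^esub> x = x"
  by (rule abelian_group.minus_equality[OF abelian_group_tri_module]) auto

lemma right_module_tri_module: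
  assumes "\<And>v w a. act (tri_add v w) a = tri_add (act v a) (act w a)"
    "\<And>v a b. act v (tri_add a b) = tri_add (act v a) (act v b)"
    "\<And>v a b. act v (tri_mul a b) = act (act v a) b"
    "\<And>v. act v tri_1 = v"
  shows "right_module T2 (tri_module act)"
  unfolding right_module_def using ring_T2 abelian_group_tri_module
  by (auto simp: T2_def assms)

abbreviation corner_module :: "(real set, real set) module" where
  "corner_module \<equiv> tri_module scale_by_22"

abbreviation regular_module :: "(real set, real set) module" where
  "regular_module \<equiv> tri_module tri_mul"

lemma right_module_corner_module: "right_module T2 corner_module"
  by (rule right_module_tri_module) (auto simp: scale_by_22_def tri_add_def tri_mul_def)

lemma right_module_regular_module: "right_module T2 regular_module"
  by (rule right_module_tri_module) (simp_all add: tri_mul_add_distrib tri_mul_assoc)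

lemma additive_map_in_End_corner_module:
  assumes g: "\<And>u v. g (tri_add u v) = tri_add (g u) (g v)"
  shows "(\<lambda>x\<in>range enc. enc (g (dec x))) \<in> End T2 corner_module"
proof -
  have "g tri_0 = tri_0" using g[of tri_0 tri_0] by simp
  then show ?thesis unfolding End_def by (auto simp: T2_def scale_by_22_def g)
qed

lemma fully_invariant_corner_module_cases:
  assumes FI: "fully_invariant T2 N corner_module"
  shows "N \<subseteq> {\<zero>\<^bsub>corner_module\<^esub>} \<or> N = carrier corner_module"
proof (cases "N \<subseteq> {\<zero>\<^bsub>corner_module\<^esub>}")
  case False
  have N: "N \<subseteq> range enc" "\<And>\<phi> x. \<phi> \<in> End T2 corner_module \<Longrightarrow> x \<in> N \<Longrightarrow> \<phi> x \<in> N"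
    using FI unfolding fully_invariant_def rsubmodule_def by (auto simp: image_subset_iff)
  obtain x where "x \<in> N" "x \<noteq> enc tri_0" using False by auto
  then obtain t where t: "enc t \<in> N" "t \<noteq> tri_0" using N(1) by blast
  \<comment> \<open>a coordinate functional \<open>f\<close> with \<open>f t = 1\<close>; the additive maps \<open>u \<mapsto> f u \<cdot> w\<close> send \<open>t\<close> to any \<open>w\<close>\<close>
  define f :: "tri \<Rightarrow> bool" where
    "f u = (if fst t then fst u else if fst (snd t) then fst (snd u) else snd (snd u))" for u
  have f_add: "f (tri_add u v) = (f u \<noteq> f v)" for u v by (auto simp: f_def tri_add_def)
  have "f t" using t(2) by (auto simp: f_def prod_eq_iff)
  have "enc w \<in> N" for w
  proof -
    define g where "g u = (if f u then w else tri_0)" for u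
    have "g (tri_add u v) = tri_add (g u) (g v)" for u v by (auto simp: g_def f_add)
    from N(2)[OF additive_map_in_End_corner_module[OF this] t(1)]
    show "enc w \<in> N" using \<open>f t\<close> by (simp add: g_def)
  qed
  then show ?thesis using N(1) by auto
qed simp

lemma centrally_endo_AIP_corner_module: "centrally_endo_AIP T2 corner_module"
  by (rule trivial_fully_invariant_imp_centrally_endo_AIP[OF right_module_corner_module
        fully_invariant_corner_module_cases])

lemma not_abelian_corner_module: "\<not> abelian_module T2 corner_module"
proof
  assume abelian: "abelian_module T2 corner_module"
  define e where "e = (\<lambda>x\<in>range enc. enc ((\<lambda>u. (fst u, False, False)) (dec x)))"
  define s where "s = (\<lambda>x\<in>range enc. enc ((\<lambda>u. (fst (snd u), fst u, snd (snd u))) (dec x)))"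
  have "e \<in> End T2 corner_module" "s \<in> End T2 corner_module"
    unfolding e_def s_def by (auto intro!: additive_map_in_End_corner_module simp: tri_add_def)
  moreover have "compose (range enc) e e = e"
    by (rule ext) (simp add: compose_def e_def)
  ultimately have "compose (range enc) e s = compose (range enc) s e"
    using abelian unfolding abelian_module_def by auto
  then have "compose (range enc) e s (enc E12) = compose (range enc) s e (enc E12)"
    by simp
  then show False by (simp add: compose_def e_def s_def)
qed

definition left_mult :: "tri \<Rightarrow> real set \<Rightarrow> real set" where
  "left_mult c = (\<lambda>x\<in>range enc. enc (tri_mul c (dec x)))"

lemma left_mult_enc [simp]: "left_mult c (enc t) = enc (tri_mul c t)"
  by (simp add: left_mult_def)

lemma left_mult_in_End_regular_module: "left_mult c \<in> End T2 regular_module"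
  unfolding End_def left_mult_def by (auto simp: T2_def tri_mul_add_distrib tri_mul_assoc)

lemma End_regular_module_left_mult:
  assumes \<phi>: "\<phi> \<in> End T2 regular_module"
  obtains c where "\<phi> = left_mult c"
proof
  show "\<phi> = left_mult (dec (\<phi> (enc tri_1)))"
  proof (rule End_eqI[OF right_module_regular_module \<phi> left_mult_in_End_regular_module])
    fix x assume x: "x \<in> carrier regular_module"
    have "\<phi> (rsm regular_module (enc tri_1) x) = rsm regular_module (\<phi> (enc tri_1)) x"
      using x by (intro End_rsm[OF right_module_regular_module \<phi>]) (auto simp: T2_def)
    moreover have "rsm regular_module (enc tri_1) x = x" using x by auto
    ultimately show "\<phi> x = left_mult (dec (\<phi> (enc tri_1))) x"
      using x by (simp add: rsm_def tri_module_def left_mult_def)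
  qed
qed

text \<open>\<open>ann_compl c\<close> is a complement of the right annihilator of \<open>c\<close> (namely \<open>R\<close>, \<open>E11 R\<close>,
  \<open>E22 R\<close> or \<open>0\<close>), and \<open>ann_compl_proj c t\<close> is the component of \<open>t\<close> in it.\<close>
definition ann_compl :: "tri \<Rightarrow> tri \<Rightarrow> bool" where
  "ann_compl c t = (if fst c then (if snd (snd c) then True else \<not> snd (snd t))
     else if c = tri_0 then t = tri_0 else \<not> fst t \<and> \<not> fst (snd t))"

definition ann_compl_proj :: "tri \<Rightarrow> tri \<Rightarrow> tri" where
  "ann_compl_proj c t = (if fst c then (if snd (snd c) then t
        else (fst t, fst (snd t) \<noteq> (fst (snd c) \<and> snd (snd t)), False))
     else if c = tri_0 then tri_0 else (False, False, snd (snd t)))"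

lemma ann_compl_zero: "ann_compl c tri_0"
  by (simp add: ann_compl_def)

lemma ann_compl_add: "ann_compl c t \<Longrightarrow> ann_compl c u \<Longrightarrow> ann_compl c (tri_add t u)"
  by (auto simp: ann_compl_def tri_add_def split: if_splits)

lemma ann_compl_mul: "ann_compl c t \<Longrightarrow> ann_compl c (tri_mul t r)"
  by (auto simp: ann_compl_def tri_mul_def split: if_splits)

lemma ann_compl_ann_eq_zero: "tri_mul c t = tri_0 \<Longrightarrow> ann_compl c t \<Longrightarrow> t = tri_0"
  by (cases c; cases t) (auto simp: ann_compl_def tri_mul_def split: if_splits)

lemma ann_compl_ann_compl_proj: "ann_compl c (ann_compl_proj c t)"
  by (cases c; cases t) (auto simp: ann_compl_def ann_compl_proj_def)

lemma mul_add_ann_compl_proj: "tri_mul c (tri_add t (ann_compl_proj c t)) = tri_0"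
  by (cases c; cases t) (auto simp: ann_compl_proj_def tri_mul_def tri_add_def)

lemma rickart_regular_module: "rickart T2 regular_module"
  unfolding rickart_def
proof
  fix \<phi> assume \<phi>: "\<phi> \<in> End T2 regular_module"
  then obtain c where \<phi>_eq: "\<phi> = left_mult c" by (rule End_regular_module_left_mult)
  let ?A = "{x \<in> carrier regular_module. \<phi> x = \<zero>\<^bsub>regular_module\<^esub>}"
  define K where "K = enc ` {t. ann_compl c t}"
  have "rsubmodule T2 ?A regular_module"
    by (rule rsubmodule_kernel[OF right_module_regular_module \<phi>])
  moreover have "rsubmodule T2 K regular_module"
    unfolding rsubmodule_def
  proof (intro conjI ballI)
    show "additive_subgroup K regular_module"
      by (rule additive_subgroup_closedI[OF abelian_group_tri_module])
        (auto simp: K_def tri_module_neg ann_compl_zero ann_compl_add)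
  qed (auto simp: K_def T2_def ann_compl_mul)
  moreover have "?A \<inter> K = {\<zero>\<^bsub>regular_module\<^esub>}"
  proof (intro equalityI subsetI)
    fix x assume "x \<in> ?A \<inter> K"
    then obtain t where "x = enc t" "ann_compl c t" "tri_mul c t = tri_0"
      using \<phi>_eq by (auto simp: K_def)
    then show "x \<in> {\<zero>\<^bsub>regular_module\<^esub>}" using ann_compl_ann_eq_zero by simp
  qed (use \<phi>_eq ann_compl_zero in \<open>auto simp: K_def tri_mul_def\<close>)
  moreover have "carrier regular_module = {x \<oplus>\<^bsub>regular_module\<^esub> y | x y. x \<in> ?A \<and> y \<in> K}"
  proof (intro equalityI subsetI)
    fix x assume "x \<in> carrier regular_module"
    then obtain t where "x = enc t" by auto
    then have "x = enc (tri_add t (ann_compl_proj c t)) \<oplus>\<^bsub>regular_module\<^esub> enc (ann_compl_proj c t)"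
      by simp
    moreover have "enc (tri_add t (ann_compl_proj c t)) \<in> ?A"
      using \<phi>_eq mul_add_ann_compl_proj by simp
    moreover have "enc (ann_compl_proj c t) \<in> K"
      using ann_compl_ann_compl_proj by (simp add: K_def)
    ultimately show "x \<in> {x \<oplus>\<^bsub>regular_module\<^esub> y | x y. x \<in> ?A \<and> y \<in> K}" by blast
  qed (auto simp: K_def)
  ultimately show "direct_summand T2 ?A regular_module"
    unfolding direct_summand_def by blast
qed

lemma not_centrally_endo_AIP_regular_module: "\<not> centrally_endo_AIP T2 regular_module"
proof
  assume "centrally_endo_AIP T2 regular_module"
  define N where "N = enc ` {t. \<not> snd (snd t)}"
  have "fully_invariant T2 N regular_module"
    unfolding fully_invariant_def rsubmodule_def
  proof (intro conjI ballI)
    show "additive_subgroup N regular_module"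
      by (rule additive_subgroup_closedI[OF abelian_group_tri_module])
        (auto simp: N_def tri_module_neg tri_add_def)
    fix \<phi> assume "\<phi> \<in> End T2 regular_module"
    then obtain c where "\<phi> = left_mult c" by (rule End_regular_module_left_mult)
    then show "\<phi> ` N \<subseteq> N" by (auto simp: N_def tri_mul_def)
  qed (auto simp: N_def T2_def tri_mul_def)
  then have "centrally_s_unital_ideal (lann T2 regular_module N) (End_ring T2 regular_module)"
    using \<open>centrally_endo_AIP T2 regular_module\<close> unfolding centrally_endo_AIP_def by blast
  moreover have "left_mult E22 \<in> lann T2 regular_module N"
    using left_mult_in_End_regular_module by (auto simp: lann_def N_def tri_mul_def)
  ultimately obtain z where z: "z \<in> lann T2 regular_module N"
    and z_central: "\<forall>s\<in>End T2 regular_module. compose (range enc) z s = compose (range enc) s z"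
    and z_unit: "compose (range enc) (left_mult E22) z = left_mult E22"
    unfolding centrally_s_unital_ideal_def by auto
  have "z \<in> End T2 regular_module" using z by (simp add: lann_def)
  then obtain c where z_eq: "z = left_mult c" by (rule End_regular_module_left_mult)
  have "z (enc E11) = enc tri_0"
    using z by (auto simp: lann_def N_def)
  then have "tri_mul c E11 = tri_0"
    by (simp add: z_eq)
  moreover have "tri_mul E22 c = E22"
    using fun_cong[OF z_unit, of "enc tri_1"] by (simp add: z_eq compose_def)
  moreover have "tri_mul c E12 = tri_mul E12 c"
    using fun_cong[OF bspec[OF z_central left_mult_in_End_regular_module[of E12]], of "enc tri_1"]
    by (simp add: z_eq compose_def)
  ultimately show False by (cases c) (auto simp: tri_mul_def)
qed

theorem proposition2p2:
  fixes R :: "'r ring" and M :: "('r, 'm) module"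
  assumes "right_module R M"
  shows "(abelian_module R M \<and> rickart R M \<longrightarrow> centrally_endo_AIP R M)
       \<and> (centrally_endo_AIP R M \<longrightarrow> endo_AIP R M)
       \<and> (\<exists>(R' :: real set ring) (M' :: (real set, real set) module).
            right_module R' M' \<and> centrally_endo_AIP R' M' \<and>
            \<not> (abelian_module R' M' \<and> rickart R' M'))
       \<and> (\<exists>(R' :: real set ring) (M' :: (real set, real set) module).
            right_module R' M' \<and> endo_AIP R' M' \<and> \<not> centrally_endo_AIP R' M')"
  using abelian_rickart_imp_centrally_endo_AIP[OF assms] centrally_endo_AIP_imp_endo_AIP
    right_module_corner_module centrally_endo_AIP_corner_module not_abelian_corner_module
    right_module_regular_module not_centrally_endo_AIP_regular_module
    rickart_imp_endo_AIP[OF right_module_regular_module rickart_regular_module]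
  by blast

end
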